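(* Let $F$ be an algebraically closed field (of arbitrary characteristic) and let $V\subseteq M_2(F)$ be a Mathieu subspace with $\dim_FV=2$. Then either $V\subseteq I_2^\perp=\{b\in M_2(F):\mathrm{Tr}(b)=0\}$, or there exist nonzero idempotents $e_1,e_2\in M_2(F)$ with $e_1+e_2=I_2$ and distinct nonzero $\lambda_1,\lambda_2\in F$ with $\lambda_1+\lambda_2\ne0$ such that $V=F(\lambda_1e_1+\lambda_2e_2)+e_1M_2(F)e_2$. Equivalently, either $V\subseteq I_2^\perp$ or $V$ is conjugate to $\left\{\begin{pmatrix}\lambda_1s&t\\0&\lambda_2s\end{pmatrix}: s,t\in F\right\}$ for some distinct nonzero $\lambda_1,\lambda_2\in F$ with $\lambda_1+\lambda_2\ne0$.
   Context: Let $\mathcal A$ be an associative algebra over a field $F$. An $F$-subspace $M\subseteq\mathcal A$ is a Mathieu subspace (MS) of $\mathcal A$ if for all $a,b,c\in\mathcal A$ such that $a^m\in M$ for all $m\ge 1$, there exists $N$ (depending on $a,b,c$) such that $ba^mc\in M$ for all $m\ge N$. *)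

theory Defs
  imports "HOL-Analysis.Analysis" "HOL-Computational_Algebra.Polynomial"
begin

definition msmult :: "'a::times \<Rightarrow> 'a^'n^'m \<Rightarrow> 'a^'n^'m" (infixl \<open>*\<^sub>M\<close> 70) where
  "c *\<^sub>M A = (\<chi> i j. c * A$i$j)"

text \<open>Matrix power w.r.t. matrix multiplication (note: (*) on vec is componentwise).\<close>
definition matpow :: "'a::semiring_1^'n^'n \<Rightarrow> nat \<Rightarrow> 'a^'n^'n" where
  "matpow a m = ((\<lambda>x. a ** x) ^^ m) (mat 1)"

definition mathieu_subspace :: "('a::field ^'n^'n) set \<Rightarrow> bool" where
  "mathieu_subspace M \<longleftrightarrow>
     (0 \<in> M \<and> (\<forall>x\<in>M. \<forall>y\<in>M. x + y \<in> M) \<and> (\<forall>c x. x \<in> M \<longrightarrow> c *\<^sub>M x \<in> M)) \<and>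
     (\<forall>a b c. (\<forall>m::nat. m \<ge> 1 \<longrightarrow> matpow a m \<in> M) \<longrightarrow>
        (\<exists>N. \<forall>m\<ge>N. b ** matpow a m ** c \<in> M))"

definition dim2 :: "('a::field ^'n^'n) set \<Rightarrow> bool" where
  "dim2 V \<longleftrightarrow> (\<exists>A B. (\<forall>s t. s *\<^sub>M A + t *\<^sub>M B = 0 \<longrightarrow> s = 0 \<and> t = 0) \<and>
                     V = {s *\<^sub>M A + t *\<^sub>M B | s t. True})"

end

theory Submission
  imports Defs
begin

text \<open>
  A Mathieu subspace containing a nonzero idempotent \<open>e\<close> contains every \<open>b e c\<close>, hence every
  matrix unit; so a two-dimensional one contains no nonzero idempotent. If such a \<open>V\<close> is not
  traceless, write \<open>V = F D + F N\<close> with \<open>tr D = 1\<close>, \<open>tr N = 0\<close>. A \<open>2 \<times> 2\<close> matrix of trace 1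
  and determinant 0 is idempotent, so the quadratic \<open>t \<mapsto> det (D + t N)\<close> has no root; over an
  algebraically closed field it is therefore constant, i.e. \<open>det N = 0\<close> and \<open>tr (D N) = 0\<close>.
  Then \<open>N\<close> is nilpotent and \<open>D N = \<lambda>\<^sub>1 N\<close>, \<open>N D = \<lambda>\<^sub>2 N\<close> with \<open>\<lambda>\<^sub>1 + \<lambda>\<^sub>2 = 1\<close> and
  \<open>\<lambda>\<^sub>1 \<lambda>\<^sub>2 = det D \<noteq> 0\<close>. A double eigenvalue would make \<open>D - \<lambda>\<^sub>1 I\<close> a multiple of \<open>N\<close> and
  put \<open>I\<close> into \<open>V\<close>; so \<open>\<lambda>\<^sub>1 \<noteq> \<lambda>\<^sub>2\<close>, \<open>D = \<lambda>\<^sub>1 e\<^sub>1 + \<lambda>\<^sub>2 e\<^sub>2\<close> for the spectral projections of \<open>D\<close>,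
  and \<open>F N = e\<^sub>1 M\<^sub>2(F) e\<^sub>2\<close>.
\<close>

lemma matrix_2x2_eq_iff:
  "(X::'a^2^2) = Y \<longleftrightarrow> X$1$1 = Y$1$1 \<and> X$1$2 = Y$1$2 \<and> X$2$1 = Y$2$1 \<and> X$2$2 = Y$2$2"
  by (auto simp: vec_eq_iff forall_2)

lemma matrix_mult_2x2_nth [simp]:
  "((A::'a::semiring_1^2^2) ** B)$i$j = A$i$1 * B$1$j + A$i$2 * B$2$j"
  by (simp add: matrix_matrix_mult_def sum_2)

lemma trace_2x2: "trace (A::'a::semiring_1^2^2) = A$1$1 + A$2$2"
  by (simp add: trace_def sum_2)

lemma msmult_nth [simp]: "(c *\<^sub>M A)$i$j = c * A$i$j"
  by (simp add: msmult_def)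

lemma mat_nth [simp]: "(mat c :: 'a::zero^'n^'n)$i$j = (if i = j then c else 0)"
  by (simp add: mat_def)

lemma msmult_msmult [simp]: "c *\<^sub>M (d *\<^sub>M A) = (c * d) *\<^sub>M (A::'a::semigroup_mult^'n^'m)"
  by (simp add: vec_eq_iff mult.assoc)

lemma msmult_one [simp]: "1 *\<^sub>M A = (A::'a::monoid_mult^'n^'m)"
  by (simp add: vec_eq_iff)

lemma msmult_zero_right [simp]: "c *\<^sub>M 0 = (0::'a::mult_zero^'n^'m)"
  by (simp add: vec_eq_iff)

lemma msmult_zero_left [simp]: "0 *\<^sub>M A = (0::'a::mult_zero^'n^'m)"
  by (simp add: vec_eq_iff)

lemma msmult_diff_left: "(a - b) *\<^sub>M A = a *\<^sub>M A - b *\<^sub>M (A::'a::ring^'n^'m)"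
  by (simp add: vec_eq_iff left_diff_distrib)

lemma msmult_matrix_mult_left:
  "(c *\<^sub>M A) ** B = c *\<^sub>M (A ** (B::'a::comm_semiring_1^'k^'n))"
  by (simp add: vec_eq_iff matrix_matrix_mult_def sum_distrib_left mult.assoc)

lemma msmult_matrix_mult_right:
  "A ** (c *\<^sub>M B) = c *\<^sub>M ((A::'a::comm_semiring_1^'n^'m) ** B)"
  by (simp add: vec_eq_iff matrix_matrix_mult_def sum_distrib_left mult.left_commute)

lemma matrix_mult_diff_distrib_right:
  "(A - B) ** C = A ** C - B ** (C::'a::comm_ring_1^'k^'n)"
  by (simp add: vec_eq_iff matrix_matrix_mult_def sum_subtractf left_diff_distrib)

lemma matrix_mult_diff_distrib_left:
  "C ** (A - B) = C ** A - C ** (B::'a::comm_ring_1^'k^'n)"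
  by (simp add: vec_eq_iff matrix_matrix_mult_def sum_subtractf right_diff_distrib)

lemma trace_zero [simp]: "trace (0::'a::semiring_1^'n^'n) = 0"
  by (simp add: trace_def)

lemma trace_msmult: "trace (c *\<^sub>M A) = c * trace (A::'a::semiring_1^'n^'n)"
  by (simp add: trace_def sum_distrib_left)

lemma proportional_matrix:
  fixes X N :: "'a::field^'n^'m"
  assumes "\<And>i j r s. X$i$j * N$r$s = X$r$s * N$i$j" and "N \<noteq> 0"
  shows "\<exists>k. X = k *\<^sub>M N"
proof -
  obtain r s where rs: "N$r$s \<noteq> 0" using \<open>N \<noteq> 0\<close> by (auto simp: vec_eq_iff)
  define k where "k = X$r$s / N$r$s"
  have "X$i$j = k * N$i$j" for i j
    using assms(1)[of i j r s] rs by (simp add: k_def times_divide_eq_left eq_divide_eq)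
  then have "X = k *\<^sub>M N"
    by (simp add: vec_eq_iff)
  then show ?thesis by blast
qed

lemma det_eq_0_if_annihilates:
  fixes X N :: "'a::field^'n^'n"
  assumes "X ** N = 0" and "N \<noteq> 0"
  shows "det X = 0"
proof (rule ccontr)
  assume "det X \<noteq> 0"
  then obtain X' where "X' ** X = mat 1"
    unfolding invertible_det_nz[symmetric] invertible_def by blast
  then have "N = X' ** (X ** N)" by (simp add: matrix_mul_assoc)
  with assms show False by simp
qed

section \<open>Identities for two-by-two matrices\<close>

lemma cayley_hamilton_2x2: "A ** A = trace A *\<^sub>M A - det A *\<^sub>M mat 1"
  for A :: "'a::comm_ring_1^2^2"
  by (simp add: matrix_2x2_eq_iff trace_2x2 det_2 algebra_simps)

lemma anticommutator_2x2:
  "X ** Y + Y ** X = trace X *\<^sub>M Y + trace Y *\<^sub>M X + (trace (X ** Y) - trace X * trace Y) *\<^sub>M mat 1"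
  for X Y :: "'a::comm_ring_1^2^2"
  by (simp add: matrix_2x2_eq_iff trace_2x2 algebra_simps)

lemma det_add_msmult_2x2:
  "det (X + t *\<^sub>M Y) = det X + t * (trace X * trace Y - trace (X ** Y)) + t^2 * det Y"
  for X Y :: "'a::comm_ring_1^2^2"
  by (simp add: trace_2x2 det_2 power2_eq_square algebra_simps)

lemma det_sub_scalar_2x2:
  "det (D - l *\<^sub>M mat 1) = det D - l * trace D + l^2" for D :: "'a::comm_ring_1^2^2"
  by (simp add: det_2 trace_2x2 power2_eq_square algebra_simps)

lemma idempotent_if_trace_one_det_zero_2x2:
  "trace A = 1 \<Longrightarrow> det A = 0 \<Longrightarrow> A ** A = (A::'a::comm_ring_1^2^2)"
  by (simp add: cayley_hamilton_2x2)

lemma nilpotent_if_trace_zero_det_zero_2x2: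
  "trace N = 0 \<Longrightarrow> det N = 0 \<Longrightarrow> N ** N = (0::'a::comm_ring_1^2^2)"
  by (simp add: cayley_hamilton_2x2 vec_eq_iff)

lemma annihilator_of_nilpotent_2x2:
  fixes X N :: "'a::field^2^2"
  assumes "trace X = 0" "trace N = 0" and "X ** N = 0" and "N \<noteq> 0"
  shows "\<exists>k. X = k *\<^sub>M N"
proof -
  have tr: "X$2$2 = - X$1$1" "N$2$2 = - N$1$1"
    using assms(1,2) by (simp_all add: trace_2x2 eq_neg_iff_add_eq_0 add.commute)
  have "X$1$1 * N$1$1 + X$1$2 * N$2$1 = 0" "X$1$1 * N$1$2 + X$1$2 * N$2$2 = 0"
    "X$2$1 * N$1$1 + X$2$2 * N$2$1 = 0" "X$2$1 * N$1$2 + X$2$2 * N$2$2 = 0"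
    using assms(3) by (simp_all add: matrix_2x2_eq_iff)
  then have "X$1$1 * N$1$2 = X$1$2 * N$1$1" "X$1$1 * N$2$1 = X$2$1 * N$1$1"
    "X$1$2 * N$2$1 = X$2$1 * N$1$2"
    using tr by (simp_all add: algebra_simps) algebra
  then have "X$i$j * N$r$s = X$r$s * N$i$j" for i j r s
    using tr exhaust_2[of i] exhaust_2[of j] exhaust_2[of r] exhaust_2[of s]
    by (auto simp: algebra_simps)
  then show ?thesis using proportional_matrix \<open>N \<noteq> 0\<close> by blast
qed

lemma nilpotent_common_eigenvector_2x2:
  fixes D N :: "'a::field^2^2"
  assumes "trace N = 0" "det N = 0" "trace (D ** N) = 0" and "N \<noteq> 0"
  shows "\<exists>l. D ** N = l *\<^sub>M N \<and> N ** D = (trace D - l) *\<^sub>M N \<and> det D = l * (trace D - l)"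
proof -
  have "(D ** N) ** N = 0"
    using nilpotent_if_trace_zero_det_zero_2x2[OF assms(1,2)] by (simp flip: matrix_mul_assoc)
  then obtain l where DN: "D ** N = l *\<^sub>M N"
    using annihilator_of_nilpotent_2x2 assms by blast
  have "D ** N + N ** D = trace D *\<^sub>M N"
    using anticommutator_2x2[of D N] assms(1,3) by simp
  then have ND: "N ** D = (trace D - l) *\<^sub>M N"
    by (simp add: DN msmult_diff_left eq_diff_eq add.commute)
  have "(D - l *\<^sub>M mat 1) ** N = 0"
    by (simp add: matrix_mult_diff_distrib_right msmult_matrix_mult_left DN)
  then have "det (D - l *\<^sub>M mat 1) = 0"
    using det_eq_0_if_annihilates \<open>N \<noteq> 0\<close> by blast
  then have "det D = l * (trace D - l)"
    by (simp add: det_sub_scalar_2x2 power2_eq_square algebra_simps)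
  with DN ND show ?thesis by blast
qed

lemma alg_closed_quadratic_nonvanishing:
  fixes p0 p1 p2 :: "'a::alg_closed_field"
  assumes "\<And>t. p0 + p1 * t + p2 * t^2 \<noteq> 0"
  shows "p1 = 0" "p2 = 0"
proof -
  show "p2 = 0"
  proof (rule ccontr)
    assume "p2 \<noteq> 0"
    then obtain t where "(\<Sum>k\<le>2. (if k = 0 then p0 else if k = 1 then p1 else p2) * t^k) = 0"
      using alg_closed[of 2 "\<lambda>k. if k = 0 then p0 else if k = 1 then p1 else p2"] by auto
    then have "p0 + p1 * t + p2 * t^2 = 0" by (simp add: numeral_2_eq_2 algebra_simps)
    with assms show False by blast
  qed
  then show "p1 = 0"
    using assms[of "- p0 / p1"] by (cases "p1 = 0") (simp_all add: field_simps)
qed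

lemma nonsingular_pencil_2x2:
  fixes D N :: "'a::alg_closed_field^2^2"
  assumes "\<And>t. det (D + t *\<^sub>M N) \<noteq> 0"
  shows "det N = 0" "trace (D ** N) = trace D * trace N"
  using alg_closed_quadratic_nonvanishing[of "det D" "trace D * trace N - trace (D ** N)" "det N"]
    assms by (simp_all add: det_add_msmult_2x2 mult.commute)

section \<open>Spectral projections\<close>

text \<open>For \<open>l = m\<close> the factor \<open>1 / (l - m)\<close> is \<open>0\<close>, so only \<open>l \<noteq> m\<close> is meaningful.\<close>

definition spectral_projection :: "'a::field^'n^'n \<Rightarrow> 'a \<Rightarrow> 'a \<Rightarrow> 'a^'n^'n" where
  "spectral_projection D l m = (1 / (l - m)) *\<^sub>M (D - m *\<^sub>M mat 1)"

lemma spectral_projection_swap: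
  "spectral_projection D m l = (1 / (l - m)) *\<^sub>M (l *\<^sub>M mat 1 - D)"
proof -
  have "1 / (m - l) * (x - l * y) = 1 / (l - m) * (l * y - x)" for x y :: 'a
    by (simp add: divide_simps algebra_simps)
  then show ?thesis by (simp add: spectral_projection_def vec_eq_iff)
qed

lemma spectral_projection_sum:
  assumes "l \<noteq> m"
  shows "spectral_projection D l m + spectral_projection D m l = mat 1"
proof -
  have "spectral_projection D l m + spectral_projection D m l
      = (1 / (l - m)) *\<^sub>M (l *\<^sub>M mat 1 - m *\<^sub>M mat 1)"
    unfolding spectral_projection_swap[of D m l]
    by (simp add: spectral_projection_def vec_eq_iff algebra_simps)
  also have "\<dots> = mat 1"
    using assms by (simp flip: msmult_diff_left)
  finally show ?thesis .
qed

lemma spectral_decomposition: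
  assumes "l \<noteq> m"
  shows "l *\<^sub>M spectral_projection D l m + m *\<^sub>M spectral_projection D m l = D"
proof -
  have "l *\<^sub>M spectral_projection D l m + m *\<^sub>M spectral_projection D m l
      = (1 / (l - m)) *\<^sub>M (l *\<^sub>M D - m *\<^sub>M D)"
    unfolding spectral_projection_swap[of D m l]
    by (simp add: spectral_projection_def vec_eq_iff algebra_simps)
  also have "\<dots> = D"
    using assms by (simp flip: msmult_diff_left)
  finally show ?thesis .
qed

lemma spectral_projection_mult_left_eigen:
  assumes "l \<noteq> m" and "D ** N = l *\<^sub>M N"
  shows "spectral_projection D l m ** N = N"
  using assms by (simp add: spectral_projection_def msmult_matrix_mult_left
      matrix_mult_diff_distrib_right flip: msmult_diff_left)

lemma spectral_projection_mult_right_eigen: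
  assumes "l \<noteq> m" and "N ** D = l *\<^sub>M N"
  shows "N ** spectral_projection D l m = N"
  using assms by (simp add: spectral_projection_def msmult_matrix_mult_right
      matrix_mult_diff_distrib_left flip: msmult_diff_left)

lemma spectral_factors_2x2:
  fixes D :: "'a::field^2^2"
  assumes "trace D = l + m" "det D = l * m"
  shows "(D - l *\<^sub>M mat 1) ** (D - m *\<^sub>M mat 1) = 0"
proof -
  have "D$1$1 + D$2$2 = l + m" "D$1$1 * D$2$2 - D$1$2 * D$2$1 = l * m"
    using assms by (simp_all add: trace_2x2 det_2)
  then show ?thesis by (simp add: matrix_2x2_eq_iff; intro conjI; algebra)
qed

lemma spectral_projection_idempotent_2x2:
  fixes D :: "'a::field^2^2"
  assumes "trace D = l + m" "det D = l * m" and "l \<noteq> m"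
  shows "spectral_projection D l m ** spectral_projection D l m = spectral_projection D l m"
proof -
  have "(D - m *\<^sub>M mat 1) ** (D - m *\<^sub>M mat 1)
      = (D - m *\<^sub>M mat 1) ** ((D - l *\<^sub>M mat 1) + (l - m) *\<^sub>M mat 1)"
    by (simp add: msmult_diff_left)
  also have "\<dots> = (l - m) *\<^sub>M (D - m *\<^sub>M mat 1)"
    using spectral_factors_2x2[of D m l] assms(1,2)
    by (simp add: matrix_add_ldistrib msmult_matrix_mult_right)
  finally show ?thesis
    using assms(3) by (simp add: spectral_projection_def msmult_matrix_mult_left msmult_matrix_mult_right)
qed

lemma spectral_projections_orthogonal_2x2:
  fixes D :: "'a::field^2^2"
  assumes "trace D = l + m" "det D = l * m"
  shows "spectral_projection D m l ** spectral_projection D l m = 0"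
  using spectral_factors_2x2[OF assms]
  by (simp add: spectral_projection_def msmult_matrix_mult_left msmult_matrix_mult_right)

lemma corner_eq_line_2x2:
  fixes e1 e2 N :: "'a::field^2^2"
  assumes "e2 ** e1 = 0" "e1 ** N = N" "N ** e2 = N" and "trace N = 0" "N \<noteq> 0"
  shows "{e1 ** m ** e2 | m. True} = {t *\<^sub>M N | t. True}"
proof (intro equalityI subsetI)
  fix X assume "X \<in> {e1 ** m ** e2 | m. True}"
  then obtain m where X: "X = e1 ** m ** e2" by blast
  have "trace X = trace ((e2 ** e1) ** m)"
    unfolding X by (metis trace_mul_sym matrix_mul_assoc)
  then have "trace X = 0" using assms(1) by simp
  moreover have "e2 ** N = 0"
    using assms(1,2) by (metis matrix_mul_assoc times0_left)
  then have "X ** N = 0"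
    unfolding X by (simp flip: matrix_mul_assoc)
  ultimately show "X \<in> {t *\<^sub>M N | t. True}"
    using annihilator_of_nilpotent_2x2 assms(4,5) by blast
next
  fix X assume "X \<in> {t *\<^sub>M N | t. True}"
  then obtain t where "X = t *\<^sub>M N" by blast
  then have "X = e1 ** X ** e2"
    using assms(2,3) by (simp add: msmult_matrix_mult_left msmult_matrix_mult_right flip: matrix_mul_assoc)
  then show "X \<in> {e1 ** m ** e2 | m. True}" by blast
qed

lemma line_plus_set_cong:
  assumes "{f a | a. True} = {g b | b. True}"
  shows "{c *\<^sub>M D + f a | c a. True} = {c *\<^sub>M D + g b | c b. True}"
proof (intro equalityI subsetI)
  fix x assume "x \<in> {c *\<^sub>M D + f a | c a. True}"
  then obtain c a where x: "x = c *\<^sub>M D + f a" by blast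
  obtain b where "f a = g b" using assms by blast
  with x show "x \<in> {c *\<^sub>M D + g b | c b. True}"
    by (simp only: mem_Collect_eq) (intro exI conjI; simp)
next
  fix x assume "x \<in> {c *\<^sub>M D + g b | c b. True}"
  then obtain c b where x: "x = c *\<^sub>M D + g b" by blast
  obtain a where "g b = f a" using assms by blast
  with x show "x \<in> {c *\<^sub>M D + f a | c a. True}"
    by (simp only: mem_Collect_eq) (intro exI conjI; simp)
qed

lemma span_eq_spectral_corner_2x2:
  fixes D N :: "'a::field^2^2"
  assumes "trace D = l1 + l2" "det D = l1 * l2" "l1 \<noteq> l2"
    and "D ** N = l1 *\<^sub>M N" "N ** D = l2 *\<^sub>M N" and "trace N = 0" "N \<noteq> 0"
  shows "\<exists>e1 e2. e1 \<noteq> 0 \<and> e2 \<noteq> 0 \<and> e1 ** e1 = e1 \<and> e2 ** e2 = e2 \<and> e1 + e2 = mat 1 \<and>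
    {c *\<^sub>M D + t *\<^sub>M N | c t. True} = {c *\<^sub>M (l1 *\<^sub>M e1 + l2 *\<^sub>M e2) + e1 ** m ** e2 | c m. True}"
proof -
  define e1 where "e1 = spectral_projection D l1 l2"
  define e2 where "e2 = spectral_projection D l2 l1"
  have swapped: "trace D = l2 + l1" "det D = l2 * l1" "l2 \<noteq> l1"
    using assms(1-3) by (simp_all add: ac_simps)
  have e1N: "e1 ** N = N" and Ne2: "N ** e2 = N"
    unfolding e1_def e2_def using assms(3-5) swapped(3)
    by (simp_all add: spectral_projection_mult_left_eigen spectral_projection_mult_right_eigen)
  have idem: "e1 ** e1 = e1" "e2 ** e2 = e2"
    unfolding e1_def e2_def using assms(1-3) swapped
    by (simp_all add: spectral_projection_idempotent_2x2)
  have sum: "e1 + e2 = mat 1" and decomp: "l1 *\<^sub>M e1 + l2 *\<^sub>M e2 = D"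
    unfolding e1_def e2_def using assms(3)
    by (simp_all add: spectral_projection_sum spectral_decomposition)
  have nonzero: "e1 \<noteq> 0" "e2 \<noteq> 0"
    using e1N Ne2 \<open>N \<noteq> 0\<close> by auto
  have "e2 ** e1 = 0"
    unfolding e1_def e2_def using assms(1,2) by (rule spectral_projections_orthogonal_2x2)
  then have "{e1 ** m ** e2 | m. True} = {t *\<^sub>M N | t. True}"
    using e1N Ne2 assms(6,7) by (rule corner_eq_line_2x2)
  then have "{c *\<^sub>M D + t *\<^sub>M N | c t. True} = {c *\<^sub>M D + e1 ** m ** e2 | c m. True}"
    by (rule line_plus_set_cong[symmetric])
  then have "{c *\<^sub>M D + t *\<^sub>M N | c t. True}
      = {c *\<^sub>M (l1 *\<^sub>M e1 + l2 *\<^sub>M e2) + e1 ** m ** e2 | c m. True}"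
    by (simp only: decomp)
  with idem sum nonzero show ?thesis by blast
qed

section \<open>Two-dimensional Mathieu subspaces contain no idempotents\<close>

lemma matpow_Suc: "matpow a (Suc m) = a ** matpow a m"
  by (simp add: matpow_def)

lemma matpow_idempotent:
  assumes "e ** e = e" and "m \<ge> 1"
  shows "matpow (e::'a::semiring_1^'n^'n) m = e"
  using \<open>m \<ge> 1\<close>
proof (induction m rule: dec_induct)
  case base
  show ?case by (simp add: matpow_def)
next
  case (step m)
  then show ?case by (simp add: matpow_Suc assms(1))
qed

lemma mathieu_subspace_idempotent_sandwich:
  assumes "mathieu_subspace V" and "e \<in> V" and "e ** e = e"
  shows "b ** e ** c \<in> V"
proof -
  have "\<forall>m::nat. m \<ge> 1 \<longrightarrow> matpow e m \<in> V"
    using assms(2,3) by (simp add: matpow_idempotent)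
  then obtain N where "\<forall>m\<ge>N. b ** matpow e m ** c \<in> V"
    using assms(1) unfolding mathieu_subspace_def by blast
  then have "b ** matpow e (max N 1) ** c \<in> V" by simp
  then show ?thesis using matpow_idempotent[OF assms(3)] by simp
qed

definition mat_unit :: "'n \<Rightarrow> 'n \<Rightarrow> 'a::zero_neq_one^'n^'n" where
  "mat_unit k l = (\<chi> r s. if r = k \<and> s = l then 1 else 0)"

lemma mat_unit_mult_nth:
  "(mat_unit k i ** X)$r$s = (if r = k then X$i$s else (0::'a::semiring_1))"
  by (simp add: matrix_matrix_mult_def mat_unit_def if_distrib[of "\<lambda>x. x * _"] cong: if_cong)

lemma mult_mat_unit_nth:
  "(X ** mat_unit j l)$r$s = (if s = l then X$r$j else (0::'a::semiring_1))"
  by (simp add: matrix_matrix_mult_def mat_unit_def if_distrib[of "\<lambda>x. _ * x"] cong: if_cong)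

lemma mat_unit_sandwich:
  "mat_unit k i ** X ** mat_unit j l = X$i$j *\<^sub>M (mat_unit k l :: 'a::semiring_1^'n^'n)"
  by (simp add: vec_eq_iff mult_mat_unit_nth mat_unit_mult_nth) (simp add: mat_unit_def)

lemma dim2_not_three_units:
  assumes "dim2 V" and "mat_unit 1 1 \<in> V" "mat_unit 1 2 \<in> V" "mat_unit 2 2 \<in> (V::('a::field^2^2) set)"
  shows False
proof -
  obtain A B where V: "V = {s *\<^sub>M A + t *\<^sub>M B | s t. True}"
    using assms(1) unfolding dim2_def by blast
  obtain s1 t1 s2 t2 s3 t3 where
    "mat_unit 1 1 = s1 *\<^sub>M A + t1 *\<^sub>M B" "mat_unit 1 2 = s2 *\<^sub>M A + t2 *\<^sub>M B"
    "mat_unit 2 2 = s3 *\<^sub>M A + t3 *\<^sub>M B"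
    using assms(2-4) unfolding V by blast
  then have "1 = s1 * A$1$1 + t1 * B$1$1" "0 = s1 * A$1$2 + t1 * B$1$2" "0 = s1 * A$2$2 + t1 * B$2$2"
    "0 = s2 * A$1$1 + t2 * B$1$1" "1 = s2 * A$1$2 + t2 * B$1$2" "0 = s2 * A$2$2 + t2 * B$2$2"
    "0 = s3 * A$1$1 + t3 * B$1$1" "0 = s3 * A$1$2 + t3 * B$1$2" "1 = s3 * A$2$2 + t3 * B$2$2"
    by (simp_all add: matrix_2x2_eq_iff mat_unit_def)
  \<comment> \<open>the standard basis of \<open>F\<^sup>3\<close> would lie in the span of \<open>(A\<^sub>1\<^sub>1, A\<^sub>1\<^sub>2, A\<^sub>2\<^sub>2)\<close> and \<open>(B\<^sub>1\<^sub>1, B\<^sub>1\<^sub>2, B\<^sub>2\<^sub>2)\<close>\<close>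
  then have "(0::'a) = 1" by algebra
  then show False by simp
qed

definition idempotent_free :: "('a::semiring_1^'n^'n) set \<Rightarrow> bool" where
  "idempotent_free V \<longleftrightarrow> (\<forall>x\<in>V. x ** x = x \<longrightarrow> x = 0)"

lemma mathieu_dim2_idempotent_free:
  fixes V :: "('a::field^2^2) set"
  assumes "mathieu_subspace V" and "dim2 V"
  shows "idempotent_free V"
  unfolding idempotent_free_def
proof (intro ballI impI)
  fix x assume "x \<in> V" "x ** x = x"
  show "x = 0"
  proof (rule ccontr)
    assume "x \<noteq> 0"
    then obtain i j where ij: "x$i$j \<noteq> 0" by (auto simp: vec_eq_iff)
    have "mat_unit k l \<in> V" for k l
    proof -
      have "mat_unit k i ** x ** mat_unit j l \<in> V"
        using mathieu_subspace_idempotent_sandwich assms(1) \<open>x \<in> V\<close> \<open>x ** x = x\<close> .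
      then have "(1 / x$i$j) *\<^sub>M (mat_unit k i ** x ** mat_unit j l) \<in> V"
        using assms(1) unfolding mathieu_subspace_def by blast
      then show ?thesis using ij by (simp add: mat_unit_sandwich)
    qed
    then show False using dim2_not_three_units[OF assms(2)] by blast
  qed
qed

lemma idempotent_free_det_nonzero_2x2:
  fixes x :: "'a::comm_ring_1^2^2"
  assumes "idempotent_free V" and "x \<in> V" "trace x = 1"
  shows "det x \<noteq> 0"
proof
  assume "det x = 0"
  then have "x = 0"
    using assms idempotent_if_trace_one_det_zero_2x2 unfolding idempotent_free_def by blast
  with \<open>trace x = 1\<close> show False by simp
qed

lemma idempotent_free_double_eigenvalue_eq_0_2x2:
  fixes D N :: "'a::field^2^2"
  assumes "idempotent_free V" and span: "\<And>c t. c *\<^sub>M D + t *\<^sub>M N \<in> V"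
    and "trace N = 0" "N \<noteq> 0" and "D ** N = l *\<^sub>M N" and "trace D = l + l"
  shows "l = 0"
proof (rule ccontr)
  assume "l \<noteq> 0"
  have "trace (D - l *\<^sub>M mat 1) = 0" "(D - l *\<^sub>M mat 1) ** N = 0"
    using assms(5,6) by (simp_all add: trace_sub trace_msmult trace_2x2
        matrix_mult_diff_distrib_right msmult_matrix_mult_left)
  then obtain k where "D - l *\<^sub>M mat 1 = k *\<^sub>M N"
    using annihilator_of_nilpotent_2x2 assms(3,4) by blast
  then have "D = l *\<^sub>M mat 1 + k *\<^sub>M N"
    by (simp add: diff_eq_eq)
  then have "mat 1 = (1 / l) *\<^sub>M D + (- k / l) *\<^sub>M N"
    using \<open>l \<noteq> 0\<close> by (simp add: vec_eq_iff field_simps)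
  then have "mat 1 \<in> V" using span by metis
  then have "(mat 1 :: 'a^2^2) = 0"
    using assms(1) unfolding idempotent_free_def by simp
  then show False by (simp add: matrix_2x2_eq_iff)
qed

lemma idempotent_free_pencil_eigenvalues:
  fixes D N :: "'a::alg_closed_field^2^2"
  assumes free: "idempotent_free V" and span: "\<And>c t. c *\<^sub>M D + t *\<^sub>M N \<in> V"
    and D: "trace D = 1" and N: "trace N = 0" "N \<noteq> 0"
  obtains l where "D ** N = l *\<^sub>M N" "N ** D = (1 - l) *\<^sub>M N" "det D = l * (1 - l)"
    and "l \<noteq> 0" "1 - l \<noteq> 0" "l \<noteq> 1 - l"
proof -
  have pencil: "det (D + t *\<^sub>M N) \<noteq> 0" for t
    using idempotent_free_det_nonzero_2x2[OF free span[of 1 t]] D N by (simp add: trace_add trace_msmult)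
  then have "det N = 0" "trace (D ** N) = 0"
    using nonsingular_pencil_2x2[of D N] N(1) by simp_all
  then obtain l where DN: "D ** N = l *\<^sub>M N" and ND: "N ** D = (1 - l) *\<^sub>M N"
    and det_D: "det D = l * (1 - l)"
    using nilpotent_common_eigenvector_2x2 D N by metis
  moreover have "l \<noteq> 0" "1 - l \<noteq> 0"
    using pencil[of 0] det_D by auto
  moreover have "l \<noteq> 1 - l"
    using idempotent_free_double_eigenvalue_eq_0_2x2[OF free span N DN] D \<open>l \<noteq> 0\<close> by auto
  ultimately show ?thesis using that by blast
qed

lemma span2_change_basis:
  fixes A B :: "'a::field^'n^'m"
  assumes "a * d - b * c \<noteq> 0"
  shows "{s *\<^sub>M (a *\<^sub>M A + b *\<^sub>M B) + t *\<^sub>M (c *\<^sub>M A + d *\<^sub>M B) | s t. True}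
       = {s *\<^sub>M A + t *\<^sub>M B | s t. True}"
proof -
  have comb: "s *\<^sub>M (a *\<^sub>M A + b *\<^sub>M B) + t *\<^sub>M (c *\<^sub>M A + d *\<^sub>M B)
      = (s * a + t * c) *\<^sub>M A + (s * b + t * d) *\<^sub>M B" for s t
    by (simp add: vec_eq_iff algebra_simps)
  define k where "k = 1 / (a * d - b * c)"
  have k: "k * (a * d - b * c) = 1" using assms by (simp add: k_def)
  have coeffs: "\<exists>s' t'. s' * a + t' * c = s \<and> s' * b + t' * d = t" for s t
  proof (intro exI conjI)
    have "k * (s * d - t * c) * a + k * (t * a - s * b) * c = s * (k * (a * d - b * c))"
      by (simp add: algebra_simps)
    then show "k * (s * d - t * c) * a + k * (t * a - s * b) * c = s" by (simp add: k)
    have "k * (s * d - t * c) * b + k * (t * a - s * b) * d = t * (k * (a * d - b * c))"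
      by (simp add: algebra_simps)
    then show "k * (s * d - t * c) * b + k * (t * a - s * b) * d = t" by (simp add: k)
  qed
  show ?thesis unfolding comb
  proof (intro equalityI subsetI)
    fix x assume "x \<in> {s *\<^sub>M A + t *\<^sub>M B | s t. True}"
    then obtain s t where x: "x = s *\<^sub>M A + t *\<^sub>M B" by blast
    obtain s' t' where "s' * a + t' * c = s" "s' * b + t' * d = t"
      using coeffs by blast
    then have "x = (s' * a + t' * c) *\<^sub>M A + (s' * b + t' * d) *\<^sub>M B" using x by simp
    then show "x \<in> {(s * a + t * c) *\<^sub>M A + (s * b + t * d) *\<^sub>M B | s t. True}" by blast
  qed blast
qed

lemma dim2_trace_one_basis:
  fixes V :: "('a::field^'n^'n) set"
  assumes "dim2 V" and "\<not> V \<subseteq> {b. trace b = 0}"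
  shows "\<exists>D N. V = {c *\<^sub>M D + t *\<^sub>M N | c t. True} \<and> trace D = 1 \<and> trace N = 0 \<and> N \<noteq> 0"
proof -
  obtain A B where indep: "\<And>s t. s *\<^sub>M A + t *\<^sub>M B = 0 \<Longrightarrow> s = 0 \<and> t = 0"
    and V: "V = {s *\<^sub>M A + t *\<^sub>M B | s t. True}"
    using assms(1) unfolding dim2_def by blast
  have trace_comb: "trace (s *\<^sub>M A + t *\<^sub>M B) = s * trace A + t * trace B" for s t
    by (simp add: trace_add trace_msmult)
  have "trace A \<noteq> 0 \<or> trace B \<noteq> 0"
    using assms(2) trace_comb unfolding V by auto
  then obtain x y where xy: "x * trace A + y * trace B = 1"
  proof
    assume "trace A \<noteq> 0"
    then show ?thesis using that[of "1 / trace A" 0] by simp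
  next
    assume "trace B \<noteq> 0"
    then show ?thesis using that[of 0 "1 / trace B"] by simp
  qed
  define D where "D = x *\<^sub>M A + y *\<^sub>M B"
  define N where "N = trace B *\<^sub>M A + (- trace A) *\<^sub>M B"
  have "V = {c *\<^sub>M D + t *\<^sub>M N | c t. True}"
  proof -
    have "x * (- trace A) - y * trace B = -1" using xy by (simp add: algebra_simps)
    then show ?thesis unfolding V D_def N_def by (intro span2_change_basis[symmetric]) simp
  qed
  moreover have "trace D = 1" "trace N = 0"
    using xy by (simp_all add: D_def N_def trace_comb mult.commute)
  moreover have "N \<noteq> 0"
    using indep \<open>trace A \<noteq> 0 \<or> trace B \<noteq> 0\<close> unfolding N_def by fastforce
  ultimately show ?thesis by blast
qed

theorem corollary3p2:
  fixes V :: "('a::alg_closed_field ^2^2) set"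
  assumes "mathieu_subspace V" and "dim2 V"
  shows "V \<subseteq> {b. trace b = 0} \<or>
    (\<exists>e1 e2 (l1::'a) (l2::'a). e1 \<noteq> 0 \<and> e2 \<noteq> 0 \<and> e1 ** e1 = e1 \<and> e2 ** e2 = e2 \<and>
       e1 + e2 = mat 1 \<and> l1 \<noteq> 0 \<and> l2 \<noteq> 0 \<and> l1 \<noteq> l2 \<and> l1 + l2 \<noteq> 0 \<and>
       V = {c *\<^sub>M (l1 *\<^sub>M e1 + l2 *\<^sub>M e2) + e1 ** m ** e2 | c m. True})"
proof (cases "V \<subseteq> {b. trace b = 0}")
  case True
  then show ?thesis by blast
next
  case False
  then obtain D N where V: "V = {c *\<^sub>M D + t *\<^sub>M N | c t. True}"
    and D: "trace D = 1" and N: "trace N = 0" "N \<noteq> 0"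
    using dim2_trace_one_basis assms(2) by blast
  have span: "c *\<^sub>M D + t *\<^sub>M N \<in> V" for c t
    using V by blast
  obtain l where "D ** N = l *\<^sub>M N" "N ** D = (1 - l) *\<^sub>M N" "det D = l * (1 - l)"
    and l: "l \<noteq> 0" "1 - l \<noteq> 0" "l \<noteq> 1 - l"
    using idempotent_free_pencil_eigenvalues[OF mathieu_dim2_idempotent_free[OF assms] span D N] .
  then obtain e1 e2 where "e1 \<noteq> 0 \<and> e2 \<noteq> 0 \<and> e1 ** e1 = e1 \<and> e2 ** e2 = e2 \<and> e1 + e2 = mat 1 \<and>
      V = {c *\<^sub>M (l *\<^sub>M e1 + (1 - l) *\<^sub>M e2) + e1 ** m ** e2 | c m. True}"
    using span_eq_spectral_corner_2x2[of D l "1 - l" N] D N V by auto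
  moreover have "l + (1 - l) \<noteq> 0" by simp
  ultimately show ?thesis using l by blast
qed

end
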